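(* Let $t\ge 3$. Consider a position in the Strong Ramsey game $\mathcal{R}(K_{\aleph_0}^{(3)}, K^{(3)}_{2,t+1}(t-2))$ in which $P_2$ has claimed all edges of a copy of $K^{(3)}_{2,t}(t-2)$ with main vertices $x,y$ and center $c$, and suppose that (i) $P_1$ does not have a threat; (ii) $P_1$ has not claimed all edges of a copy of $K_{2,t}^{(3)}$ whose center is $c$ and one of whose main vertices is $x$; (iii) $P_1$ has not claimed all edges of a copy of $K_{2,t}^{(3)}$ whose center is $x$ and one of whose main vertices is $c$. If it is $P_2$'s turn, then $P_2$ has a strategy from this position guaranteeing that $P_1$ never claims all edges of a copy of $K^{(3)}_{2,t+1}(t-2)$ (a drawing strategy).
   Context: Strong Ramsey game $\mathcal{R}(B,G)$: players $P_1$, $P_2$ alternately claim unclaimed edges of the $k$-uniform hypergraph $B$, $P_1$ first; the first to claim all edges of a copy of the finite $k$-uniform hypergraph $G$ wins; if nobody does so in finitely many moves the game is a draw. $K_{\aleph_0}^{(3)}$ is the complete $3$-uniform hypergraph on a countably infinite vertex set. For $s\ge0$, $t\ge3$, $K_{2,t}(s)$ is the graph obtained from $K_{2,t}$ by identifying the center of a star with $s$ leaves (the leaves being new vertices) with one of the two vertices of degree $t$. For a graph $H$, $H^{(3)}$ is the $3$-uniform hypergraph obtained by adding one fixed new vertex (the center) to every edge of $H$. Main vertices of $K_{2,t}(s)^{(3)}$ and $K_{2,t}^{(3)}$: the vertices of degree at least $3$ in the underlying graph, i.e. the two vertices of the part of size $2$ of $K_{2,t}$. $P_1$ has a threat if she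 has claimed all edges of a copy of $K^{(3)}_{2,t+1}(t-2)$ minus one edge $e$, where the edge of the board corresponding to $e$ is claimed by neither player. *)

theory Defs
  imports Main
begin

(* Abstract vertices for the small (hyper)graphs:
   Cen = the added centre vertex of H^(3); MA, MB = the two vertices of the part of
   size 2 of K_{2,t} (the main vertices); Lf i = the t vertices of the other part;
   St j = the s new leaves of the star, whose centre is identified with MA. *)
datatype kv = Cen | MA | MB | Lf nat | St nat

definition K2ts :: "nat \<Rightarrow> nat \<Rightarrow> kv set set" where
  "K2ts t s = {{MA, Lf i} | i. i < t} \<union> {{MB, Lf i} | i. i < t} \<union> {{MA, St j} | j. j < s}"

(* H^(3): add the fixed new vertex Cen to every edge of H *)
definition cone3 :: "kv set set \<Rightarrow> kv set set" where
  "cone3 H = insert Cen ` H"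

definition board_edges :: "nat set set" where
  "board_edges = {e. card e = 3}"

definition copy_edges :: "kv set set \<Rightarrow> (kv \<Rightarrow> nat) \<Rightarrow> nat set set" where
  "copy_edges G f = (\<lambda>e. f ` e) ` G"

definition has_copy :: "kv set set \<Rightarrow> nat set set \<Rightarrow> bool" where
  "has_copy G X \<longleftrightarrow> (\<exists>f. inj_on f (\<Union>G) \<and> copy_edges G f \<subseteq> X)"

definition threat :: "nat \<Rightarrow> nat set set \<Rightarrow> nat set set \<Rightarrow> bool" where
  "threat t A B \<longleftrightarrow> (\<exists>f e. inj_on f (\<Union>(cone3 (K2ts (t+1) (t-2))))
      \<and> e \<in> copy_edges (cone3 (K2ts (t+1) (t-2))) f
      \<and> copy_edges (cone3 (K2ts (t+1) (t-2))) f - {e} \<subseteq> A \<and> e \<notin> A \<and> e \<notin> B)"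

(* Game continued from the position (A = P1's edges, B = P2's edges), P2 to move.
   sigma maps the list of P1's moves made since the position to P2's next move,
   so P2's n-th move (n = 0,1,...) is sigma [a 0, ..., a (n-1)], and P1's n-th move a n
   is made after it.  sigma is a drawing strategy for P2 if, against every legal sequence
   of P1 moves, all P2 moves are legal and whenever P1 owns a copy of G after her n-th
   move, P2 already owned a copy of G (i.e. P2 had won first and the game had ended). *)
definition drawing_strategy_P2 ::
  "kv set set \<Rightarrow> nat set set \<Rightarrow> nat set set \<Rightarrow> (nat set list \<Rightarrow> nat set) \<Rightarrow> bool" where
  "drawing_strategy_P2 G A B \<sigma> \<longleftrightarrow>
     (\<forall>a :: nat \<Rightarrow> nat set.
        let m = (\<lambda>n. \<sigma> (map a [0..<n])) in
        (\<forall>n. a n \<in> board_edges \<and> a n \<notin> A \<union> B \<union> a ` {..<n} \<union> m ` {..n}) \<longrightarrow>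
        (\<forall>n. m n \<in> board_edges \<and> m n \<notin> A \<union> B \<union> a ` {..<n} \<union> m ` {..<n}) \<and>
        (\<forall>n. has_copy G (A \<union> a ` {..n}) \<longrightarrow> has_copy G (B \<union> m ` {..n})))"

end

theory Submission
  imports Defs
begin

(* P2 repeatedly claims {c,y,v} for a new vertex v.  If P1 does not answer with {c,x,v},
   P2 claims it next and extends her K_{2,t}(t-2) with main vertices x, y and centre c by the
   leaf v, so she wins.  Otherwise all new edges of P1 are forced replies {c,x,v} with v fresh.
   Consider a copy of K_{2,t+1}(t-2) in P1's edges plus one further unclaimed edge e.  Neither
   the centre nor a main vertex can be mapped to a fresh v: each lies on three copy edges, but
   only e and {c,x,v} contain v.  So if the copy uses a forced reply {c,x,v}, then v is the
   image of a leaf and {c,x} is the image of the centre and a main vertex; deleting the only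
   leaf whose edges may meet e leaves a K_{2,t} in P1's edges that (ii) or (iii) excludes.  If
   it uses no forced reply, it is a threat, excluded by (i), or a copy P1 already owned. *)

lemma mem_cone3_K2ts:
  "g \<in> cone3 (K2ts t s) \<longleftrightarrow>
     (\<exists>i<t. g = {Cen,MA,Lf i}) \<or> (\<exists>i<t. g = {Cen,MB,Lf i}) \<or> (\<exists>j<s. g = {Cen,MA,St j})"
  unfolding cone3_def K2ts_def by auto

lemma mem_cone3_K2t:
  "g \<in> cone3 (K2ts t 0) \<longleftrightarrow> (\<exists>i<t. \<exists>M\<in>{MA,MB}. g = {Cen,M,Lf i})"
  by (auto simp: mem_cone3_K2ts)

lemma leaf_edge_mem_cone3_K2ts: "i < t \<Longrightarrow> M \<in> {MA,MB} \<Longrightarrow> {Cen,M,Lf i} \<in> cone3 (K2ts t s)"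
  by (auto simp: mem_cone3_K2ts)

lemma cone3_K2ts_edgeE:
  assumes "g \<in> cone3 (K2ts t s)"
  obtains M w where "M \<in> {MA,MB}" "w \<notin> {Cen,MA,MB}" "g = {Cen,M,w}"
proof -
  consider (A) i where "g = {Cen,MA,Lf i}" | (B) i where "g = {Cen,MB,Lf i}"
    | (S) j where "g = {Cen,MA,St j}"
    using assms unfolding mem_cone3_K2ts by blast
  then show thesis
  proof cases
    case (A i)
    then show ?thesis using that[of MA "Lf i"] by simp
  next
    case (B i)
    then show ?thesis using that[of MB "Lf i"] by simp
  next
    case (S j)
    then show ?thesis using that[of MA "St j"] by simp
  qed
qed

lemma Union_cone3_K2ts:
  assumes "0 < t"
  shows "\<Union>(cone3 (K2ts t s)) = {Cen,MA,MB} \<union> Lf ` {..<t} \<union> St ` {..<s}"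
proof
  show "\<Union>(cone3 (K2ts t s)) \<subseteq> {Cen,MA,MB} \<union> Lf ` {..<t} \<union> St ` {..<s}"
    by (auto simp: mem_cone3_K2ts)
  have "{Cen,MB,Lf 0} \<in> cone3 (K2ts t s)" "\<And>i. i < t \<Longrightarrow> {Cen,MA,Lf i} \<in> cone3 (K2ts t s)"
    "\<And>j. j < s \<Longrightarrow> {Cen,MA,St j} \<in> cone3 (K2ts t s)"
    using assms by (auto simp: mem_cone3_K2ts)
  then show "{Cen,MA,MB} \<union> Lf ` {..<t} \<union> St ` {..<s} \<subseteq> \<Union>(cone3 (K2ts t s))"
    using assms by blast
qed

lemma image_mem_copy_edges: "g \<in> G \<Longrightarrow> f ` g \<in> copy_edges G f"
  unfolding copy_edges_def by blast

lemma has_copy_mono: "has_copy G X \<Longrightarrow> X \<subseteq> Y \<Longrightarrow> has_copy G Y"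
  unfolding has_copy_def by blast

lemma triple_mem_board_edges: "u \<noteq> v \<Longrightarrow> u \<noteq> w \<Longrightarrow> v \<noteq> w \<Longrightarrow> {u,v,w} \<in> board_edges"
  for u v w :: nat
  by (simp add: board_edges_def)

lemma finite_Union_board_edges: "finite E \<Longrightarrow> E \<subseteq> board_edges \<Longrightarrow> finite (\<Union>E)"
  by (intro finite_Union) (auto simp: board_edges_def subset_eq intro: card_ge_0_finite)

lemma inj_on_cone3_K2ts_main_vertices:
  assumes "0 < t" "inj_on g (\<Union>(cone3 (K2ts t s)))"
  shows "g Cen \<notin> {g MA, g MB}" "g MA \<noteq> g MB"
proof -
  have "inj_on g {Cen,MA,MB}"
    using assms(2) by (rule inj_on_subset) (use assms(1) in \<open>simp add: Union_cone3_K2ts\<close>)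
  then show "g Cen \<notin> {g MA, g MB}" "g MA \<noteq> g MB"
    by (simp_all add: inj_on_def)
qed

lemma has_copy_add_leaf:
  assumes "0 < t"
    and inj: "inj_on g (\<Union>(cone3 (K2ts t s)))"
    and copy: "copy_edges (cone3 (K2ts t s)) g \<subseteq> B"
    and "g Cen = c" and "{g MA, g MB} = {x, y}"
    and "v \<notin> \<Union>B"
  shows "has_copy (cone3 (K2ts (t+1) s)) (insert {c,x,v} (insert {c,y,v} B))"
proof -
  define U where "U = \<Union>(cone3 (K2ts t s))"
  have U: "U = {Cen,MA,MB} \<union> Lf ` {..<t} \<union> St ` {..<s}"
    unfolding U_def using assms(1) by (rule Union_cone3_K2ts)
  have U_Suc: "\<Union>(cone3 (K2ts (t+1) s)) = insert (Lf t) U"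
    by (simp add: Union_cone3_K2ts U lessThan_Suc insert_commute)
  have "g ` U \<subseteq> \<Union>B"
    using copy unfolding U_def copy_edges_def by blast
  then have "v \<notin> g ` U"
    using assms(6) by blast
  moreover have "Lf t \<notin> U"
    unfolding U by auto
  ultimately have inj': "inj_on (g(Lf t := v)) (insert (Lf t) U)"
    using inj unfolding U_def[symmetric] inj_on_def by auto
  have "copy_edges (cone3 (K2ts (t+1) s)) (g(Lf t := v)) \<subseteq> insert {c,x,v} (insert {c,y,v} B)"
  proof
    fix h assume "h \<in> copy_edges (cone3 (K2ts (t+1) s)) (g(Lf t := v))"
    then obtain e where e: "e \<in> cone3 (K2ts (t+1) s)" "h = (g(Lf t := v)) ` e"
      unfolding copy_edges_def by blast
    show "h \<in> insert {c,x,v} (insert {c,y,v} B)"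
    proof (cases "Lf t \<in> e")
      case True
      then obtain M where "M \<in> {MA,MB}" "e = {Cen,M,Lf t}"
        using e(1) by (auto simp: mem_cone3_K2ts)
      then show ?thesis
        using e(2) assms(4,5) by (auto simp: doubleton_eq_iff)
    next
      case False
      then have "e \<in> cone3 (K2ts t s)"
        using e(1) by (auto simp: mem_cone3_K2ts less_Suc_eq)
      moreover have "h = g ` e"
        using e(2) False by auto
      ultimately show ?thesis
        using copy image_mem_copy_edges by blast
    qed
  qed
  then show ?thesis
    unfolding has_copy_def U_Suc using inj' by blast
qed

lemma has_K2t_copy_dropping_leaf:
  assumes inj: "inj_on f (\<Union>(cone3 (K2ts (t+1) s)))"
    and leaves: "\<And>i M. i \<le> t \<Longrightarrow> i \<noteq> i0 \<Longrightarrow> M \<in> {MA,MB} \<Longrightarrow> f ` {Cen,M,Lf i} \<in> A"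
  shows "\<exists>h. inj_on h (\<Union>(cone3 (K2ts t 0))) \<and> copy_edges (cone3 (K2ts t 0)) h \<subseteq> A
           \<and> h Cen = f Cen \<and> h MA = f MA \<and> h MB = f MB"
proof -
  define skip where "skip i = (if i < i0 then i else Suc i)" for i
  define r where "r w = (case w of Lf i \<Rightarrow> Lf (skip i) | _ \<Rightarrow> w)" for w
  have "inj r"
    unfolding inj_def r_def skip_def by (auto split: kv.splits if_splits)
  have r_image: "r ` \<Union>(cone3 (K2ts t 0)) \<subseteq> \<Union>(cone3 (K2ts (t+1) s))"
  proof -
    have "r ` g \<in> cone3 (K2ts (t+1) s)" if g: "g \<in> cone3 (K2ts t 0)" for g
    proof -
      obtain i M where "i < t" "M \<in> {MA,MB}" "g = {Cen,M,Lf i}"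
        using g unfolding mem_cone3_K2t by blast
      moreover have "skip i < t+1"
        using \<open>i < t\<close> unfolding skip_def by simp
      ultimately show ?thesis
        unfolding r_def by (auto intro: leaf_edge_mem_cone3_K2ts)
    qed
    then show ?thesis by blast
  qed
  have "inj_on (f \<circ> r) (\<Union>(cone3 (K2ts t 0)))"
  proof (rule comp_inj_on)
    show "inj_on r (\<Union>(cone3 (K2ts t 0)))"
      using \<open>inj r\<close> by (rule inj_on_subset) simp
    show "inj_on f (r ` \<Union>(cone3 (K2ts t 0)))"
      using inj r_image by (rule inj_on_subset)
  qed
  moreover have "copy_edges (cone3 (K2ts t 0)) (f \<circ> r) \<subseteq> A"
  proof
    fix h assume "h \<in> copy_edges (cone3 (K2ts t 0)) (f \<circ> r)"
    then obtain g where "g \<in> cone3 (K2ts t 0)" "h = (f \<circ> r) ` g"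
      unfolding copy_edges_def by blast
    then obtain i M where "i < t" "M \<in> {MA,MB}" "g = {Cen,M,Lf i}" "h = (f \<circ> r) ` g"
      unfolding mem_cone3_K2t by blast
    then have "i < t" "M \<in> {MA,MB}" "h = f ` {Cen,M,Lf (skip i)}"
      unfolding r_def by auto
    moreover have "skip i \<le> t" "skip i \<noteq> i0" if "i < t"
      using that unfolding skip_def by auto
    ultimately show "h \<in> A"
      using leaves by blast
  qed
  moreover have "(f \<circ> r) Cen = f Cen" "(f \<circ> r) MA = f MA" "(f \<circ> r) MB = f MB"
    by (simp_all add: r_def)
  ultimately show ?thesis
    by blast
qed

context
  fixes t s c x :: nat and A :: "nat set set" and V :: "nat set" and e :: "nat set"
    and f :: "kv \<Rightarrow> nat"
  assumes inj: "inj_on f (\<Union>(cone3 (K2ts (t+1) s)))"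
    and covered: "copy_edges (cone3 (K2ts (t+1) s)) f - {e} \<subseteq> A \<union> (\<lambda>v. {c,x,v}) ` V"
    and fresh: "\<And>v. v \<in> V \<Longrightarrow> v \<notin> \<Union>A \<and> v \<noteq> c \<and> v \<noteq> x"
begin

lemma inj_on_main_and_leaves: "inj_on f ({Cen,MA,MB} \<union> Lf ` {..t})"
  using inj by (rule inj_on_subset) (auto simp: Union_cone3_K2ts)

lemma image_edge_through_fresh_vertex:
  assumes "g \<in> cone3 (K2ts (t+1) s)" "u \<in> g" "f u \<in> V"
  shows "f ` g = {c,x,f u} \<or> f ` g = e"
proof (rule disjCI)
  assume "f ` g \<noteq> e"
  moreover have "f ` g \<notin> A"
    using fresh[OF assms(3)] assms(2) by blast
  ultimately have "f ` g \<in> (\<lambda>v. {c,x,v}) ` V"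
    using covered image_mem_copy_edges[OF assms(1)] by blast
  then obtain v where "v \<in> V" "f ` g = {c,x,v}"
    by blast
  moreover from this have "f u = v"
    using fresh[OF assms(3)] assms(2) by blast
  ultimately show "f ` g = {c,x,f u}"
    by simp
qed

lemma leaf_edge_images_eq_imp_eq:
  assumes "i \<le> t" "j \<le> t" "M \<in> {MA,MB}" "M' \<in> {MA,MB}"
    and "f ` {Cen,M,Lf i} = f ` {Cen,M',Lf j}"
  shows "i = j \<and> M = M'"
proof -
  have "f (Lf i) \<in> f ` {Cen,M',Lf j}" "f M \<in> f ` {Cen,M',Lf j}"
    using assms(5) by blast+
  moreover have "Lf i \<in> {Cen,MA,MB} \<union> Lf ` {..t}" "M \<in> {Cen,MA,MB} \<union> Lf ` {..t}"
    "{Cen,M',Lf j} \<subseteq> {Cen,MA,MB} \<union> Lf ` {..t}"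
    using assms(1-4) by auto
  ultimately have "Lf i \<in> {Cen,M',Lf j}" "M \<in> {Cen,M',Lf j}"
    using inj_on_image_mem_iff[OF inj_on_main_and_leaves] by blast+
  then show ?thesis
    using assms(3) by auto
qed

lemma main_vertices_not_fresh:
  assumes "2 \<le> t" "w \<in> {Cen,MA,MB}"
  shows "f w \<notin> V"
proof
  assume fresh_w: "f w \<in> V"
  obtain M where M: "M \<in> {MA,MB}" "w \<in> {Cen,M}"
    using assms(2) by blast
  define E where "E i = f ` {Cen,M,Lf i}" for i
  have E_mem: "E i \<in> {{c,x,f w}, e}" if "i \<le> 2" for i
  proof -
    have "{Cen,M,Lf i} \<in> cone3 (K2ts (t+1) s)"
      using leaf_edge_mem_cone3_K2ts M(1) that assms(1) by simp
    moreover have "w \<in> {Cen,M,Lf i}"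
      using M(2) by blast
    ultimately have "f ` {Cen,M,Lf i} = {c,x,f w} \<or> f ` {Cen,M,Lf i} = e"
      by (rule image_edge_through_fresh_vertex[OF _ _ fresh_w])
    then show ?thesis
      unfolding E_def by blast
  qed
  have E_inj: "E i \<noteq> E j" if "i \<le> 2" "j \<le> 2" "i \<noteq> j" for i j
    using leaf_edge_images_eq_imp_eq[of i j M M] M(1) that assms(1) unfolding E_def by auto
  show False
    using E_mem[of 0] E_mem[of 1] E_mem[of 2] E_inj[of 0 1] E_inj[of 0 2] E_inj[of 1 2] by auto
qed

lemma leaf_meeting_e_unique:
  obtains i0 where "\<And>i M. i \<le> t \<Longrightarrow> M \<in> {MA,MB} \<Longrightarrow> f ` {Cen,M,Lf i} = e \<Longrightarrow> i = i0"
proof (cases "\<exists>i\<le>t. \<exists>M\<in>{MA,MB}. f ` {Cen,M,Lf i} = e")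
  case True
  then obtain i1 M1 where i1: "i1 \<le> t" "M1 \<in> {MA,MB}" "f ` {Cen,M1,Lf i1} = e"
    by blast
  have "i = i1" if "i \<le> t" "M \<in> {MA,MB}" "f ` {Cen,M,Lf i} = e" for i M
    using leaf_edge_images_eq_imp_eq[of i i1 M M1] that i1 by simp
  then show thesis
    by (rule that)
next
  case False
  then show thesis
    using that by blast
qed

lemma leaf_edges_in_A_but_one:
  assumes "2 \<le> t"
  obtains i0 where "\<And>i M. i \<le> t \<Longrightarrow> i \<noteq> i0 \<Longrightarrow> M \<in> {MA,MB} \<Longrightarrow> f ` {Cen,M,Lf i} \<in> A"
proof -
  obtain i0 where i0: "\<And>i M. i \<le> t \<Longrightarrow> M \<in> {MA,MB} \<Longrightarrow> f ` {Cen,M,Lf i} = e \<Longrightarrow> i = i0"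
    using leaf_meeting_e_unique by blast
  have "f ` {Cen,M,Lf i} \<in> A" if i: "i \<le> t" "i \<noteq> i0" and M: "M \<in> {MA,MB}" for i M
  proof (rule ccontr)
    have edge: "{Cen,M',Lf i} \<in> cone3 (K2ts (t+1) s)" if "M' \<in> {MA,MB}" for M'
      using leaf_edge_mem_cone3_K2ts that i(1) by simp
    have not_e: "f ` {Cen,M',Lf i} \<noteq> e" if "M' \<in> {MA,MB}" for M'
      using i0 i that by blast
    assume "f ` {Cen,M,Lf i} \<notin> A"
    then have "f ` {Cen,M,Lf i} \<in> (\<lambda>v. {c,x,v}) ` V"
      using covered image_mem_copy_edges[OF edge[OF M]] not_e[OF M] by blast
    then obtain v where v: "v \<in> V" "f ` {Cen,M,Lf i} = {c,x,v}"
      by blast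
    then have "v \<in> f ` {Cen,M,Lf i}"
      by simp
    then have "v = f Cen \<or> v = f M \<or> v = f (Lf i)"
      by blast
    then have fresh_leaf: "f (Lf i) \<in> V"
      using v(1) main_vertices_not_fresh[OF assms] M by auto
    have "f ` {Cen,M',Lf i} = {c,x,f (Lf i)}" if "M' \<in> {MA,MB}" for M'
      using image_edge_through_fresh_vertex[OF edge[OF that] _ fresh_leaf] not_e[OF that] by blast
    then have "f ` {Cen,MA,Lf i} = f ` {Cen,MB,Lf i}"
      by simp
    then show False
      using leaf_edge_images_eq_imp_eq[of i i MA MB] i(1) by simp
  qed
  then show ?thesis
    using that by blast
qed

lemma copy_over_forced_replies_cases:
  assumes "2 \<le> t"
  shows "(\<exists>h. inj_on h (\<Union>(cone3 (K2ts t 0))) \<and> copy_edges (cone3 (K2ts t 0)) h \<subseteq> A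
          \<and> (h Cen = c \<and> (h MA = x \<or> h MB = x) \<or> h Cen = x \<and> (h MA = c \<or> h MB = c)))
    \<or> copy_edges (cone3 (K2ts (t+1) s)) f - {e} \<subseteq> A"
proof (rule disjCI)
  assume "\<not> copy_edges (cone3 (K2ts (t+1) s)) f - {e} \<subseteq> A"
  then obtain g where g: "g \<in> cone3 (K2ts (t+1) s)" "f ` g \<noteq> e" "f ` g \<notin> A"
    unfolding copy_edges_def by blast
  then have "f ` g \<in> (\<lambda>v. {c,x,v}) ` V"
    using covered image_mem_copy_edges[OF g(1)] by blast
  then obtain v where v: "v \<in> V" "f ` g = {c,x,v}"
    by blast
  obtain M w where M: "M \<in> {MA,MB}" "w \<notin> {Cen,MA,MB}" "g = {Cen,M,w}"
    using cone3_K2ts_edgeE[OF g(1)] by blast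
  have "v \<in> f ` g"
    using v(2) by simp
  then have "v = f Cen \<or> v = f M \<or> v = f w"
    using M(3) by blast
  moreover have "f Cen \<notin> V" "f M \<notin> V"
    using main_vertices_not_fresh[OF assms] M(1) by auto
  ultimately have "v = f w"
    using v(1) by blast
  have "w \<in> \<Union>(cone3 (K2ts (t+1) s))" "{Cen,M} \<subseteq> \<Union>(cone3 (K2ts (t+1) s))"
    using g(1) M(3) by blast+
  then have "f w \<notin> {f Cen, f M}"
    using inj M(1,2) by (auto simp: inj_on_eq_iff)
  moreover have "f w \<notin> {c,x}"
    using fresh v(1) \<open>v = f w\<close> by blast
  moreover have "insert (f w) {f Cen, f M} = insert (f w) {c,x}"
    using v(2) M(3) \<open>v = f w\<close> by (simp add: insert_commute)
  ultimately have "{f Cen, f M} = {c,x}"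
    by (simp add: insert_ident)
  moreover obtain i0 where "\<And>i M. i \<le> t \<Longrightarrow> i \<noteq> i0 \<Longrightarrow> M \<in> {MA,MB} \<Longrightarrow> f ` {Cen,M,Lf i} \<in> A"
    using leaf_edges_in_A_but_one[OF assms] by blast
  then obtain h where "inj_on h (\<Union>(cone3 (K2ts t 0)))" "copy_edges (cone3 (K2ts t 0)) h \<subseteq> A"
    "h Cen = f Cen" "h MA = f MA" "h MB = f MB"
    using has_K2t_copy_dropping_leaf[OF inj] by blast
  ultimately show "\<exists>h. inj_on h (\<Union>(cone3 (K2ts t 0))) \<and> copy_edges (cone3 (K2ts t 0)) h \<subseteq> A
          \<and> (h Cen = c \<and> (h MA = x \<or> h MB = x) \<or> h Cen = x \<and> (h MA = c \<or> h MB = c))"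
    using M(1) by (auto simp: doubleton_eq_iff)
qed

end

lemma not_has_copy_with_forced_replies:
  fixes A B :: "nat set set"
  assumes "3 \<le> t" "e \<notin> A" "e \<notin> B"
    and fresh: "\<And>v. v \<in> V \<Longrightarrow> v \<notin> \<Union>A \<and> v \<noteq> c \<and> v \<noteq> x"
    and no_copy: "\<not> has_copy (cone3 (K2ts (t+1) (t-2))) A"
    and no_threat: "\<not> threat t A B"
    and no_K2t_c: "\<not> (\<exists>f. inj_on f (\<Union>(cone3 (K2ts t 0))) \<and> copy_edges (cone3 (K2ts t 0)) f \<subseteq> A
            \<and> f Cen = c \<and> (f MA = x \<or> f MB = x))"
    and no_K2t_x: "\<not> (\<exists>f. inj_on f (\<Union>(cone3 (K2ts t 0))) \<and> copy_edges (cone3 (K2ts t 0)) f \<subseteq> A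
            \<and> f Cen = x \<and> (f MA = c \<or> f MB = c))"
  shows "\<not> has_copy (cone3 (K2ts (t+1) (t-2))) (A \<union> insert e ((\<lambda>v. {c,x,v}) ` V))"
proof
  let ?G = "cone3 (K2ts (t+1) (t-2))"
  assume "has_copy ?G (A \<union> insert e ((\<lambda>v. {c,x,v}) ` V))"
  then obtain f where inj: "inj_on f (\<Union>?G)" and "copy_edges ?G f \<subseteq> A \<union> insert e ((\<lambda>v. {c,x,v}) ` V)"
    unfolding has_copy_def by blast
  then have "copy_edges ?G f - {e} \<subseteq> A \<union> (\<lambda>v. {c,x,v}) ` V"
    by blast
  then have "(\<exists>h. inj_on h (\<Union>(cone3 (K2ts t 0))) \<and> copy_edges (cone3 (K2ts t 0)) h \<subseteq> A
          \<and> (h Cen = c \<and> (h MA = x \<or> h MB = x) \<or> h Cen = x \<and> (h MA = c \<or> h MB = c)))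
    \<or> copy_edges ?G f - {e} \<subseteq> A"
    using copy_over_forced_replies_cases[OF inj _ fresh] assms(1) by simp
  then have "copy_edges ?G f - {e} \<subseteq> A"
    using no_K2t_c no_K2t_x by blast
  show False
  proof (cases "e \<in> copy_edges ?G f")
    case True
    then have "threat t A B"
      unfolding threat_def using inj \<open>copy_edges ?G f - {e} \<subseteq> A\<close> assms(2,3) by blast
    then show False
      using no_threat by contradiction
  next
    case False
    then have "has_copy ?G A"
      unfolding has_copy_def using inj \<open>copy_edges ?G f - {e} \<subseteq> A\<close> by blast
    then show False
      using no_copy by contradiction
  qed
qed

lemma first_deviation_cases:
  fixes P :: "nat \<Rightarrow> bool"
  obtains "\<forall>j<n. P j" | k where "k < n" "\<not> P k" "\<forall>j<k. P j"
proof (cases "\<forall>j<n. P j")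
  case False
  then obtain j where j: "j < n" "\<not> P j"
    by blast
  define k where "k = (LEAST k. \<not> P k)"
  have "\<not> P k"
    unfolding k_def using j(2) by (rule LeastI[where P = "\<lambda>k. \<not> P k"])
  moreover have "k \<le> j"
    unfolding k_def using j(2) by (rule Least_le[where P = "\<lambda>k. \<not> P k"])
  moreover have "\<forall>i<k. P i"
    unfolding k_def using not_less_Least by blast
  ultimately show thesis
    using that(2) j(1) by (meson le_less_trans)
next
  case True
  then show thesis
    by (rule that(1))
qed

definition fresh_base :: "nat \<Rightarrow> nat set list \<Rightarrow> nat" where
  "fresh_base N as = N + 3 * length as + sum_list (map Max as)"

(* At P1's first deviation k she claims {c,x,N+k} and has won; as drawing_strategy_P2 still
   asks for legal moves afterwards, she then claims triples above every vertex seen so far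
   (fresh_base grows by at least 3 per move). *)
definition forcing_strategy :: "nat \<Rightarrow> nat \<Rightarrow> nat \<Rightarrow> nat \<Rightarrow> nat set list \<Rightarrow> nat set" where
  "forcing_strategy c x y N as =
    (if \<forall>j<length as. as ! j = {c,x,N+j} then {c,y,N + length as}
     else let k = LEAST j. as ! j \<noteq> {c,x,N+j} in
       if length as = Suc k then {c,x,N+k}
       else {fresh_base N as, fresh_base N as + 1, fresh_base N as + 2})"

lemma fresh_base_upt: "fresh_base N (map a [0..<n]) = N + 3 * n + (\<Sum>i<n. Max (a i))"
  by (simp add: fresh_base_def interv_sum_list_conv_sum_set_nat atLeast0LessThan)

lemma fresh_base_upt_mono:
  assumes "j < n"
  shows "fresh_base N (map a [0..<j]) + 3 \<le> fresh_base N (map a [0..<n])"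
proof -
  have "(\<Sum>i<j. Max (a i)) \<le> (\<Sum>i<n. Max (a i))"
    using assms by (intro sum_mono2) auto
  then show ?thesis
    unfolding fresh_base_upt using assms by simp
qed

lemma vertex_lt_fresh_base_upt:
  assumes "j < n" "finite (a j)" "v \<in> a j"
  shows "v < fresh_base N (map a [0..<n])"
proof -
  have "v \<le> Max (a j)"
    using assms(2,3) by simp
  also have "\<dots> \<le> (\<Sum>i<n. Max (a i))"
    using assms(1) by (intro member_le_sum) auto
  finally show ?thesis
    unfolding fresh_base_upt using assms(1) by simp
qed

lemma forcing_strategy_bounded:
  assumes "c < N" "x < N" "y < N" "v \<in> forcing_strategy c x y N as"
  shows "v < fresh_base N as + 3"
  using assms unfolding forcing_strategy_def fresh_base_def Let_def
  by (simp split: if_split_asm; elim disjE; linarith)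

lemma forcing_strategy_follow:
  "\<forall>j<n. a j = {c,x,N+j} \<Longrightarrow> forcing_strategy c x y N (map a [0..<n]) = {c,y,N+n}"
  by (simp add: forcing_strategy_def)

lemma forcing_strategy_deviation:
  assumes "k < n" "a k \<noteq> {c,x,N+k}" "\<forall>j<k. a j = {c,x,N+j}"
  shows "forcing_strategy c x y N (map a [0..<n]) =
    (if n = Suc k then {c,x,N+k}
     else {fresh_base N (map a [0..<n]), fresh_base N (map a [0..<n]) + 1,
           fresh_base N (map a [0..<n]) + 2})"
proof -
  have least: "(LEAST j. map a [0..<n] ! j \<noteq> {c,x,N+j}) = k"
  proof (rule Least_equality)
    show "map a [0..<n] ! k \<noteq> {c,x,N+k}"
      using assms(1,2) by simp
    show "k \<le> j" if "map a [0..<n] ! j \<noteq> {c,x,N+j}" for j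
    proof (rule ccontr)
      assume "\<not> k \<le> j"
      then have "j < k" "j < n"
        using assms(1) by auto
      then show False
        using that assms(3) by simp
    qed
  qed
  have deviates: "\<not> (\<forall>j<length (map a [0..<n]). map a [0..<n] ! j = {c,x,N+j})"
    using assms(1,2) by auto
  have "forcing_strategy c x y N (map a [0..<n]) =
    (if length (map a [0..<n]) = Suc k then {c,x,N+k}
     else {fresh_base N (map a [0..<n]), fresh_base N (map a [0..<n]) + 1,
           fresh_base N (map a [0..<n]) + 2})"
    by (simp only: forcing_strategy_def if_not_P[OF deviates] Let_def least)
  then show ?thesis
    by simp
qed

context
  fixes c x y N :: nat and a :: "nat \<Rightarrow> nat set"
begin

abbreviation move :: "nat \<Rightarrow> nat set" where
  "move n \<equiv> forcing_strategy c x y N (map a [0..<n])"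

lemma forcing_strategy_wins:
  fixes A B :: "nat set set"
  assumes deviation_wins: "\<And>j. has_copy G (insert {c,x,N+j} (insert {c,y,N+j} B))"
    and no_P1_copy: "\<And>n e. e \<notin> A \<union> B \<Longrightarrow> \<not> has_copy G (A \<union> insert e ((\<lambda>v. {c,x,v}) ` {N..<N+n}))"
    and "a n \<notin> A \<union> B" and P1_copy: "has_copy G (A \<union> a ` {..n})"
  shows "has_copy G (B \<union> move ` {..n})"
proof -
  consider "\<forall>j<n. a j = {c,x,N+j}" | k where "k < n" "a k \<noteq> {c,x,N+k}" "\<forall>j<k. a j = {c,x,N+j}"
    by (rule first_deviation_cases)
  then show ?thesis
  proof cases
    case 1
    then have "a ` {..<n} \<subseteq> (\<lambda>v. {c,x,v}) ` {N..<N+n}"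
      by auto
    then have "A \<union> a ` {..n} \<subseteq> A \<union> insert (a n) ((\<lambda>v. {c,x,v}) ` {N..<N+n})"
      by (auto simp: lessThan_Suc_atMost[symmetric] lessThan_Suc)
    then show ?thesis
      using has_copy_mono[OF P1_copy] no_P1_copy[OF assms(3)] by blast
  next
    case (2 k)
    have "move k = {c,y,N+k}"
      using 2(3) by (simp add: forcing_strategy_follow)
    moreover have "move (Suc k) = {c,x,N+k}"
      using forcing_strategy_deviation[of k "Suc k", OF _ 2(2,3)] by simp
    moreover have "k \<in> {..n}" "Suc k \<in> {..n}"
      using 2(1) by simp_all
    then have "insert (move (Suc k)) (insert (move k) B) \<subseteq> B \<union> move ` {..n}"
      by blast
    ultimately show ?thesis
      using has_copy_mono[OF deviation_wins[of k]] by simp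
  qed
qed

context
  fixes A B :: "nat set set"
  assumes small: "\<And>E v. E \<in> A \<union> B \<Longrightarrow> v \<in> E \<Longrightarrow> v < N"
    and below_N: "c < N" "x < N" "y < N"
    and distinct: "c \<noteq> x" "c \<noteq> y" "x \<noteq> y"
begin

lemma large_vertex_notin_position: "N \<le> v \<Longrightarrow> v \<notin> \<Union>(A \<union> B)"
  using small by fastforce

lemma move_legal_while_followed:
  assumes "\<forall>j<n. a j = {c,x,N+j}"
  shows "move n \<in> board_edges \<and> move n \<notin> A \<union> B \<union> a ` {..<n} \<union> move ` {..<n}"
proof -
  have follow: "move j = {c,y,N+j}" if "j \<le> n" for j
    using assms that by (intro forcing_strategy_follow) simp
  have move_n: "move n = {c,y,N+n}"
    by (rule follow) simp
  have "y \<notin> \<Union>(a ` {..<n})"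
    using assms below_N distinct by auto
  moreover have "N+n \<notin> \<Union>(move ` {..<n})"
    using follow below_N by auto
  moreover have "N+n \<notin> \<Union>(A \<union> B)"
    by (rule large_vertex_notin_position) simp
  ultimately have "move n \<notin> A \<union> B \<union> a ` {..<n} \<union> move ` {..<n}"
    unfolding move_n by blast
  moreover have "move n \<in> board_edges"
    unfolding move_n using below_N distinct by (intro triple_mem_board_edges) auto
  ultimately show ?thesis
    by blast
qed

lemma move_legal_at_first_deviation:
  assumes "a k \<noteq> {c,x,N+k}" "\<forall>j<k. a j = {c,x,N+j}"
  shows "move (Suc k) \<in> board_edges
    \<and> move (Suc k) \<notin> A \<union> B \<union> a ` {..<Suc k} \<union> move ` {..<Suc k}"
proof -
  have move_Suc: "move (Suc k) = {c,x,N+k}"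
    using forcing_strategy_deviation[of k "Suc k", OF _ assms] by simp
  have "N+k \<notin> a j" if "j < k" for j
    using assms(2) below_N that by simp
  then have "move (Suc k) \<notin> a ` {..<k}"
    unfolding move_Suc by blast
  then have "move (Suc k) \<notin> a ` {..<Suc k}"
    using assms(1) move_Suc by (simp add: lessThan_Suc)
  moreover have "x \<notin> move j" if "j < Suc k" for j
  proof -
    have "move j = {c,y,N+j}"
      using assms(2) that by (intro forcing_strategy_follow) simp
    then show ?thesis
      using below_N distinct by simp
  qed
  then have "move (Suc k) \<notin> move ` {..<Suc k}"
    unfolding move_Suc by blast
  moreover have "N+k \<notin> \<Union>(A \<union> B)"
    by (rule large_vertex_notin_position) simp
  then have "move (Suc k) \<notin> A \<union> B"
    unfolding move_Suc by blast
  moreover have "move (Suc k) \<in> board_edges"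
    unfolding move_Suc using below_N distinct by (intro triple_mem_board_edges) auto
  ultimately show ?thesis
    by blast
qed

lemma move_legal_after_deviation:
  assumes "Suc k < n" "a k \<noteq> {c,x,N+k}" "\<forall>j<k. a j = {c,x,N+j}"
    and P1_edges: "\<And>j. j < n \<Longrightarrow> a j \<in> board_edges"
  shows "move n \<in> board_edges \<and> move n \<notin> A \<union> B \<union> a ` {..<n} \<union> move ` {..<n}"
proof -
  define b where "b = fresh_base N (map a [0..<n])"
  have move_n: "move n = {b, b+1, b+2}"
    unfolding b_def using forcing_strategy_deviation[OF _ assms(2,3), of n] assms(1) by simp
  have "b \<notin> \<Union>(A \<union> B)"
    unfolding b_def fresh_base_def by (rule large_vertex_notin_position) simp
  moreover have "b \<notin> \<Union>(a ` {..<n})"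
  proof -
    have "finite (a j)" if "j < n" for j
      using P1_edges[OF that] by (simp add: board_edges_def card_ge_0_finite)
    then show ?thesis
      using vertex_lt_fresh_base_upt unfolding b_def by blast
  qed
  moreover have "b \<notin> \<Union>(move ` {..<n})"
    using forcing_strategy_bounded[OF below_N] fresh_base_upt_mono[of _ n N a]
    unfolding b_def by fastforce
  ultimately have "move n \<notin> A \<union> B \<union> a ` {..<n} \<union> move ` {..<n}"
    unfolding move_n by blast
  moreover have "move n \<in> board_edges"
    unfolding move_n by (intro triple_mem_board_edges) auto
  ultimately show ?thesis
    by blast
qed

lemma forcing_strategy_legal:
  assumes "\<And>j. j < n \<Longrightarrow> a j \<in> board_edges"
  shows "move n \<in> board_edges \<and> move n \<notin> A \<union> B \<union> a ` {..<n} \<union> move ` {..<n}"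
proof -
  consider "\<forall>j<n. a j = {c,x,N+j}" | k where "k < n" "a k \<noteq> {c,x,N+k}" "\<forall>j<k. a j = {c,x,N+j}"
    by (rule first_deviation_cases)
  then show ?thesis
  proof cases
    case 1
    then show ?thesis
      by (rule move_legal_while_followed)
  next
    case (2 k)
    show ?thesis
    proof (cases "n = Suc k")
      case True
      then show ?thesis
        using move_legal_at_first_deviation[OF 2(2,3)] by simp
    next
      case False
      then have "Suc k < n"
        using 2(1) by simp
      then show ?thesis
        using move_legal_after_deviation[OF _ 2(2,3) assms] by blast
    qed
  qed
qed

end

end

lemma forcing_strategy_draws:
  fixes A B :: "nat set set" and c x y N :: nat
  assumes small: "\<And>E v. E \<in> A \<union> B \<Longrightarrow> v \<in> E \<Longrightarrow> v < N"
    and "c < N" "x < N" "y < N" "c \<noteq> x" "c \<noteq> y" "x \<noteq> y"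
    and deviation_wins: "\<And>j. has_copy G (insert {c,x,N+j} (insert {c,y,N+j} B))"
    and no_P1_copy: "\<And>n e. e \<notin> A \<union> B \<Longrightarrow> \<not> has_copy G (A \<union> insert e ((\<lambda>v. {c,x,v}) ` {N..<N+n}))"
  shows "drawing_strategy_P2 G A B (forcing_strategy c x y N)"
  unfolding drawing_strategy_P2_def Let_def
proof (intro allI impI)
  fix a :: "nat \<Rightarrow> nat set"
  let ?m = "\<lambda>n. forcing_strategy c x y N (map a [0..<n])"
  assume "\<forall>n. a n \<in> board_edges \<and> a n \<notin> A \<union> B \<union> a ` {..<n} \<union> ?m ` {..n}"
  then have P1_edges: "\<And>j. j < n \<Longrightarrow> a j \<in> board_edges" and P1_fresh: "a n \<notin> A \<union> B" for n
    by blast+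
  have "?m n \<in> board_edges \<and> ?m n \<notin> A \<union> B \<union> a ` {..<n} \<union> ?m ` {..<n}" for n
    using forcing_strategy_legal[OF small assms(2-7) P1_edges] .
  moreover have "has_copy G (A \<union> a ` {..n}) \<longrightarrow> has_copy G (B \<union> ?m ` {..n})" for n
    using forcing_strategy_wins[OF deviation_wins no_P1_copy P1_fresh] by (rule impI)
  ultimately show "(\<forall>n. ?m n \<in> board_edges \<and> ?m n \<notin> A \<union> B \<union> a ` {..<n} \<union> ?m ` {..<n}) \<and>
      (\<forall>n. has_copy G (A \<union> a ` {..n}) \<longrightarrow> has_copy G (B \<union> ?m ` {..n}))"
    by blast
qed

theorem lemma4p1:
  fixes t :: nat and A B :: "nat set set" and x y c :: nat
  assumes "t \<ge> 3"
    and "finite A" and "finite B" and "A \<subseteq> board_edges" and "B \<subseteq> board_edges"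
    and "A \<inter> B = {}" and "card A = Suc (card B)"
    and "\<not> has_copy (cone3 (K2ts (t+1) (t-2))) A"
    and "\<not> has_copy (cone3 (K2ts (t+1) (t-2))) B"
    and "\<exists>f. inj_on f (\<Union>(cone3 (K2ts t (t-2)))) \<and> copy_edges (cone3 (K2ts t (t-2))) f \<subseteq> B
            \<and> f Cen = c \<and> {f MA, f MB} = {x, y}"
    and "\<not> threat t A B"
    and "\<not> (\<exists>f. inj_on f (\<Union>(cone3 (K2ts t 0))) \<and> copy_edges (cone3 (K2ts t 0)) f \<subseteq> A
            \<and> f Cen = c \<and> (f MA = x \<or> f MB = x))"
    and "\<not> (\<exists>f. inj_on f (\<Union>(cone3 (K2ts t 0))) \<and> copy_edges (cone3 (K2ts t 0)) f \<subseteq> A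
            \<and> f Cen = x \<and> (f MA = c \<or> f MB = c))"
  shows "\<exists>\<sigma>. drawing_strategy_P2 (cone3 (K2ts (t+1) (t-2))) A B \<sigma>"
proof -
  \<comment> \<open>Disjointness, the move count and P2 not having won yet only make the position
    reachable; the strategy does not need them.\<close>
  obtain g where g: "inj_on g (\<Union>(cone3 (K2ts t (t-2))))" "copy_edges (cone3 (K2ts t (t-2))) g \<subseteq> B"
    "g Cen = c" "{g MA, g MB} = {x, y}"
    using assms(10) by blast
  have distinct: "c \<noteq> x" "c \<noteq> y" "x \<noteq> y"
    using inj_on_cone3_K2ts_main_vertices[OF _ g(1)] assms(1) g(3,4) by (auto simp: doubleton_eq_iff)
  have "finite ({c,x,y} \<union> \<Union>(A \<union> B))"
    using finite_Union_board_edges[of "A \<union> B"] assms(2-5) by simp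
  then obtain N where "\<forall>v \<in> {c,x,y} \<union> \<Union>(A \<union> B). v < N"
    unfolding finite_nat_set_iff_bounded by blast
  then have small: "\<And>E v. E \<in> A \<union> B \<Longrightarrow> v \<in> E \<Longrightarrow> v < N" and "c < N" "x < N" "y < N"
    by blast+
  then have fresh: "v \<notin> \<Union>A \<and> v \<noteq> c \<and> v \<noteq> x" "v \<notin> \<Union>B" if "N \<le> v" for v
    using that by fastforce+
  have "drawing_strategy_P2 (cone3 (K2ts (t+1) (t-2))) A B (forcing_strategy c x y N)"
  proof (rule forcing_strategy_draws[OF small \<open>c < N\<close> \<open>x < N\<close> \<open>y < N\<close> distinct])
    show "has_copy (cone3 (K2ts (t+1) (t-2))) (insert {c,x,N+j} (insert {c,y,N+j} B))" for j
      using has_copy_add_leaf[OF _ g fresh(2)] assms(1) by simp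
    show "\<not> has_copy (cone3 (K2ts (t+1) (t-2))) (A \<union> insert e ((\<lambda>v. {c,x,v}) ` {N..<N+n}))"
      if "e \<notin> A \<union> B" for n e
      using not_has_copy_with_forced_replies[where V = "{N..<N+n}", OF assms(1) _ _ fresh(1)
          assms(8,11,12,13)] that
      by simp
  qed
  then show ?thesis
    by blast
qed

end
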